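(* Let $x,y$ be positive integers and $z,w$ positive real numbers such that $w-z$ is a positive integer with $w-z\geq x$. Then $$\sum_{j=x}^{w-z}\binom{j}{y}\binom{w-j}{z}=\sum_{i=\max\{0,\,x+y+z-w\}}^{y} \binom{x}{i}\binom{w-x+1}{z+y-i+1}.$$
   Context: Binomial coefficients are generalized binomial coefficients: for real $a,b$, $\binom{a}{b}=\frac{\Gamma(a+1)}{\Gamma(b+1)\Gamma(a-b+1)}$, where $\Gamma$ is the Gamma function; in particular, if $b$ is a positive integer then $\binom{a}{b}=\frac{a(a-1)\cdots(a-b+1)}{b!}$. *)

theory Defs
  imports "HOL-Analysis.Analysis"
begin

text \<open>Generalized binomial coefficient for real arguments:
  binom(a,b) = Gamma(a+1) / (Gamma(b+1) Gamma(a-b+1)),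
  with the standard convention 1/Gamma = 0 at the poles (via rGamma).\<close>
definition rbinom :: "real \<Rightarrow> real \<Rightarrow> real" where
  "rbinom a b = Gamma (a + 1) * rGamma (b + 1) * rGamma (a - b + 1)"

end

theory Submission
  imports Defs "HOL-Computational_Algebra.Formal_Power_Series"
begin

text \<open>Put \<open>n = w - z\<close>, so that \<open>binom(w - j, z) = binom(z + n - j, n - j)\<close>. Expanding
  \<open>binom(j, y)\<close> for \<open>j = x + t\<close> by Vandermonde's identity and swapping the sums leaves inner sums
  \<open>\<Sum>\<^sub>t binom(t, r) binom(z + m - t, m - t)\<close>, which the parallel form of Vandermonde's identity
  \<open>\<Sum>\<^sub>k binom(a + k, k) binom(b + p - k, p - k) = binom(a + b + p + 1, p)\<close> (ordinary Vandermonde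
  after negating the upper indices) evaluates to \<open>binom(z + m + 1, m - r)\<close>; the inner sums with
  \<open>r > m\<close> vanish, which produces the lower limit \<open>max {0, x + y + z - w}\<close>.\<close>

lemma gbinomial_parallel_Vandermonde:
  fixes a b :: "'a :: field_char_0"
  shows "(\<Sum>k\<le>n. ((a + of_nat k) gchoose k) * ((b + of_nat (n - k)) gchoose (n - k)))
       = (a + b + of_nat n + 1) gchoose n"
proof -
  have negate: "((a + of_nat k) gchoose k) * ((b + of_nat (n - k)) gchoose (n - k))
      = (-1) ^ n * (((- a - 1) gchoose k) * ((- b - 1) gchoose (n - k)))" if "k \<le> n" for k
  proof -
    have "((a + of_nat k) gchoose k) = (-1) ^ k * ((- a - 1) gchoose k)"
      by (subst gbinomial_negated_upper) simp
    moreover have "((b + of_nat (n - k)) gchoose (n - k)) = (-1) ^ (n - k) * ((- b - 1) gchoose (n - k))"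
      by (subst gbinomial_negated_upper) simp
    moreover have "(-1 :: 'a) ^ k * (-1) ^ (n - k) = (-1) ^ n"
      using that by (simp flip: power_add)
    ultimately show ?thesis
      by (simp add: mult_ac)
  qed
  have "(\<Sum>k\<le>n. ((a + of_nat k) gchoose k) * ((b + of_nat (n - k)) gchoose (n - k)))
      = (-1) ^ n * (\<Sum>k=0..n. ((- a - 1) gchoose k) * ((- b - 1) gchoose (n - k)))"
    unfolding sum_distrib_left atLeast0AtMost by (rule sum.cong[OF refl]) (rule negate, simp)
  also have "\<dots> = (-1) ^ n * ((- a - 1 + (- b - 1)) gchoose n)"
    by (simp only: gbinomial_Vandermonde)
  also have "\<dots> = (-1) ^ n * ((-1) ^ n * ((a + b + of_nat n + 1) gchoose n))"
    by (subst (2) gbinomial_negated_upper) (simp add: algebra_simps)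
  also have "\<dots> = (a + b + of_nat n + 1) gchoose n"
    by (simp flip: mult.assoc power_mult_distrib)
  finally show ?thesis .
qed

lemma convolution_binomial_gbinomial:
  fixes z :: "'a :: field_char_0"
  shows "(\<Sum>t\<le>m. of_nat (t choose r) * ((z + of_nat (m - t)) gchoose (m - t)))
       = (if r \<le> m then (z + of_nat m + 1) gchoose (m - r) else 0)"
proof (cases "r \<le> m")
  case True
  define f where "f t = of_nat (t choose r) * ((z + of_nat (m - t)) gchoose (m - t))" for t
  have "(\<Sum>t\<le>m. f t) = (\<Sum>t=r..m. f t)"
    by (rule sum.mono_neutral_right) (auto simp: f_def binomial_eq_0)
  also have "\<dots> = (\<Sum>u\<le>m - r. f (r + u))"
    using True by (simp add: sum.atLeastAtMost_shift_0 atLeast0AtMost comp_def)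
  also have "\<dots> = (\<Sum>u\<le>m - r. ((of_nat r + of_nat u) gchoose u) * ((z + of_nat (m - r - u)) gchoose (m - r - u)))"
  proof (rule sum.cong[OF refl])
    fix u
    have "(r + u) choose r = (r + u) choose u"
      using binomial_symmetric[of u "r + u"] by simp
    then have "of_nat ((r + u) choose r) = (of_nat (r + u) gchoose u :: 'a)"
      by (simp add: binomial_gbinomial)
    then show "f (r + u) = ((of_nat r + of_nat u) gchoose u) * ((z + of_nat (m - r - u)) gchoose (m - r - u))"
      by (simp add: f_def)
  qed
  also have "\<dots> = (of_nat r + z + of_nat (m - r) + 1) gchoose (m - r)"
    by (rule gbinomial_parallel_Vandermonde)
  finally show ?thesis
    using True by (simp add: f_def algebra_simps)
next
  case False
  then show ?thesis
    by (auto intro: sum.neutral simp: binomial_eq_0)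
qed

lemma convolution_binomial_gbinomial_atLeast:
  fixes z :: "'a :: field_char_0"
  assumes "x \<le> n"
  shows "(\<Sum>j=x..n. of_nat (j choose y) * ((z + of_nat (n - j)) gchoose (n - j)))
       = (\<Sum>i=x+y-n..y. of_nat (x choose i) * ((z + of_nat (n - x) + 1) gchoose (n + i - (x + y))))"
proof -
  define m where "m = n - x"
  define g where "g s = (z + of_nat s) gchoose s" for s
  have "(\<Sum>j=x..n. of_nat (j choose y) * g (n - j))
      = (\<Sum>t\<le>m. of_nat ((x + t) choose y) * g (m - t))"
    using assms by (simp add: sum.atLeastAtMost_shift_0 atLeast0AtMost m_def)
  also have "\<dots> = (\<Sum>t\<le>m. \<Sum>i\<le>y. of_nat (x choose i) * (of_nat (t choose (y - i)) * g (m - t)))"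
  proof (rule sum.cong[OF refl])
    fix t
    have "of_nat ((x + t) choose y) = (of_nat (\<Sum>i\<le>y. (x choose i) * (t choose (y - i))) :: 'a)"
      by (simp only: vandermonde)
    then show "of_nat ((x + t) choose y) * g (m - t)
        = (\<Sum>i\<le>y. of_nat (x choose i) * (of_nat (t choose (y - i)) * g (m - t)))"
      by (simp add: sum_distrib_right mult.assoc)
  qed
  also have "\<dots> = (\<Sum>i\<le>y. of_nat (x choose i) * (\<Sum>t\<le>m. of_nat (t choose (y - i)) * g (m - t)))"
    by (subst sum.swap) (simp add: sum_distrib_left)
  also have "\<dots> = (\<Sum>i\<le>y. if y - i \<le> m
                     then of_nat (x choose i) * ((z + of_nat m + 1) gchoose (m - (y - i))) else 0)"
    unfolding g_def convolution_binomial_gbinomial by (intro sum.cong) auto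
  also have "\<dots> = (\<Sum>i\<in>{i\<in>{..y}. y - i \<le> m}. of_nat (x choose i) * ((z + of_nat m + 1) gchoose (m - (y - i))))"
    by (simp only: sum.inter_filter[OF finite_atMost])
  also have "\<dots> = (\<Sum>i=x+y-n..y. of_nat (x choose i) * ((z + of_nat (n - x) + 1) gchoose (n + i - (x + y))))"
    using assms by (intro sum.cong) (auto simp: m_def)
  finally show ?thesis
    unfolding g_def .
qed

lemma sum_int_atLeastAtMost:
  "(\<Sum>j\<in>{int a..int b}. f j) = (\<Sum>j=a..b. f (int j))"
  by (simp add: sum.reindex flip: image_int_atLeastAtMost)

text \<open>The hypothesis excludes the poles of \<open>Gamma (b + 1)\<close>, where \<open>rbinom\<close> vanishes although
  \<open>gchoose\<close> need not: \<open>rbinom (-1) (-2) = 0\<close> but \<open>(-1) gchoose 1 = -1\<close>.\<close>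

lemma rbinom_eq_gbinomial:
  assumes "b + 1 \<notin> \<int>\<^sub>\<le>\<^sub>0" and "a - b = of_nat k"
  shows "rbinom a b = a gchoose k"
proof -
  have a: "a = b + of_nat k"
    using assms(2) by simp
  have Gamma_nonzero: "Gamma (b + 1) \<noteq> 0"
    using assms(1) by (simp add: Gamma_eq_zero_iff)
  have "Gamma (a + 1) = pochhammer (b + 1) k * Gamma (b + 1)"
    using pochhammer_Gamma[OF assms(1), of k] Gamma_nonzero by (simp add: a field_simps)
  moreover have "rGamma (real k + 1) = inverse (fact k)"
    using Gamma_fact[of k] by (simp add: rGamma_inverse_Gamma add.commute)
  ultimately have "rbinom a b = pochhammer (b + 1) k / fact k"
    using Gamma_nonzero by (simp add: rbinom_def a rGamma_inverse_Gamma divide_inverse)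
  also have "\<dots> = a gchoose k"
    by (simp add: gbinomial_pochhammer' a)
  finally show ?thesis .
qed

lemma rbinom_of_nat: "rbinom (real n) (real k) = real (n choose k)"
proof (cases "k \<le> n")
  case True
  then have "rbinom (real n) (real k) = real n gchoose (n - k)"
    by (intro rbinom_eq_gbinomial) auto
  also have "\<dots> = real n gchoose k"
    by (simp only: gbinomial_of_nat_symmetric [OF True])
  finally show ?thesis
    by (simp add: binomial_gbinomial)
next
  case False
  then have "rGamma (real n - real k + 1) = 0"
    using rGamma_of_int[of "int n - int k + 1"] by simp
  then show ?thesis
    using False by (simp add: rbinom_def binomial_eq_0)
qed

lemma sum_rbinom_convolution:
  fixes z :: real
  assumes "x \<le> n" and "z > -1"
  shows "(\<Sum>j=x..n. rbinom (real j) (real y) * rbinom (z + real n - real j) z)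
       = (\<Sum>i=x+y-n..y. rbinom (real x) (real i) * rbinom (z + real n - real x + 1) (z + real y - real i + 1))"
proof -
  have "(\<Sum>j=x..n. rbinom (real j) (real y) * rbinom (z + real n - real j) z)
      = (\<Sum>j=x..n. real (j choose y) * ((z + real (n - j)) gchoose (n - j)))"
  proof (rule sum.cong[OF refl])
    fix j assume "j \<in> {x..n}"
    then have shift: "z + real n - real j = z + real (n - j)"
      by simp
    have "rbinom (z + real (n - j)) z = (z + real (n - j)) gchoose (n - j)"
      by (rule rbinom_eq_gbinomial) (use \<open>z > -1\<close> in auto)
    then show "rbinom (real j) (real y) * rbinom (z + real n - real j) z
        = real (j choose y) * ((z + real (n - j)) gchoose (n - j))"
      unfolding shift by (simp add: rbinom_of_nat)
  qed
  also have "\<dots> = (\<Sum>i=x+y-n..y. real (x choose i) * ((z + real (n - x) + 1) gchoose (n + i - (x + y))))"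
    using \<open>x \<le> n\<close> by (rule convolution_binomial_gbinomial_atLeast)
  also have "\<dots> = (\<Sum>i=x+y-n..y. rbinom (real x) (real i) * rbinom (z + real n - real x + 1) (z + real y - real i + 1))"
  proof (rule sum.cong[OF refl])
    fix i assume i: "i \<in> {x+y-n..y}"
    have shift: "z + real n - real x + 1 = z + real (n - x) + 1"
      using \<open>x \<le> n\<close> by simp
    have "x + y \<le> n + i"
      using i by auto
    have "rbinom (z + real (n - x) + 1) (z + real y - real i + 1)
        = (z + real (n - x) + 1) gchoose (n + i - (x + y))"
    proof (rule rbinom_eq_gbinomial)
      show "z + real y - real i + 1 + 1 \<notin> \<int>\<^sub>\<le>\<^sub>0"
        using i \<open>z > -1\<close> by auto
      show "z + real (n - x) + 1 - (z + real y - real i + 1) = real (n + i - (x + y))"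
        using \<open>x \<le> n\<close> \<open>x + y \<le> n + i\<close> by (simp add: of_nat_diff)
    qed
    then show "real (x choose i) * ((z + real (n - x) + 1) gchoose (n + i - (x + y)))
        = rbinom (real x) (real i) * rbinom (z + real n - real x + 1) (z + real y - real i + 1)"
      unfolding shift by (simp add: rbinom_of_nat)
  qed
  finally show ?thesis .
qed

theorem lemma2p3:
  fixes x y :: nat and z w :: real
  assumes "x > 0" and "y > 0" and "z > 0" and "w > 0"
    and "w - z \<in> \<int>" and "w - z > 0" and "w - z \<ge> real x"
  shows "(\<Sum>j\<in>{int x..\<lfloor>w - z\<rfloor>}. rbinom (of_int j) (real y) * rbinom (w - of_int j) z)
       = (\<Sum>i\<in>{max 0 \<lfloor>real x + real y + z - w\<rfloor>..int y}.
            rbinom (real x) (of_int i) * rbinom (w - real x + 1) (z + real y - of_int i + 1))"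
proof -
  obtain k where "w - z = of_int k"
    using \<open>w - z \<in> \<int>\<close> by (rule Ints_cases)
  define n where "n = nat k"
  have w: "w = z + real n"
    using \<open>w - z = of_int k\<close> \<open>w - z > 0\<close> by (simp add: n_def)
  have "x \<le> n"
    using \<open>w - z \<ge> real x\<close> w by simp
  have floor_upper: "\<lfloor>w - z\<rfloor> = int n"
    using w by simp
  have "real x + real y + z - w = of_int (int x + int y - int n)"
    using w by simp
  then have "\<lfloor>real x + real y + z - w\<rfloor> = int x + int y - int n"
    by (simp only: floor_of_int)
  then have floor_lower: "max 0 \<lfloor>real x + real y + z - w\<rfloor> = int (x + y - n)"
    by linarith
  show ?thesis
    unfolding floor_upper floor_lower sum_int_atLeastAtMost
    using sum_rbinom_convolution[OF \<open>x \<le> n\<close>, of z y] \<open>z > 0\<close> by (simp add: w)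
qed

end
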